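(* Let $\lambda\in\overline{\mathrm{Pr}}_k$ and $\mu\in W\cdot\lambda$. Then $\mu\in\overline{\mathrm{Pr}}_k$ if and only if $\mu=w^{-1}\cdot\lambda$ for some $w\in W^\lambda$, where $W^\lambda=\{w\in W:\Delta_+\cap w(\Delta_-)\subset\Delta_+\setminus\Delta(\lambda)\}$ and $\Delta(\lambda)=\{\alpha\in\Delta:\langle\lambda+\rho,\alpha^\vee\rangle\in\mathbb Z\}$.
   Context: Let $\mathfrak g=\mathfrak{sl}_{n+1}(\mathbb C)$, $n\ge1$, $\mathfrak h$ the traceless diagonal matrices, $\Delta=\{\varepsilon_i-\varepsilon_j:i\neq j\}$, $\Delta_+=\{\varepsilon_i-\varepsilon_j:i<j\}$, $\Delta_-=-\Delta_+$, $\alpha_i=\varepsilon_i-\varepsilon_{i+1}$; $(\cdot,\cdot)$ the invariant form on $\mathfrak h^*$ with $(\alpha,\alpha)=2$ for roots, $\langle\mu,\alpha^\vee\rangle=(\mu,\alpha)$; $\omega_i$ fundamental weights, $P^\vee=\bigoplus\mathbb Z\omega_i$, $\rho=\sum\omega_i$; $W$ the Weyl group, $w\cdot\mu=w(\mu+\rho)-\rho$. Fix $k\in\mathbb Q$ with $k+n+1=p/q$, $p,q\in\mathbb N$ coprime, $p\ge n+1$. $\overline{\mathrm{Pr}}_{k,\mathbb Z}=\{\sum\lambda_i\omega_i:\lambda_i\in\mathbb N_0,\sum\lambda_i\le p-n-1\}$. For $w\in W,\eta\in P^\vee$, $C(w,\eta)$ means: for all $\alpha\in\Delta_+$, $0\le(\eta,\alpha)\le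 q-1$ if $w(\alpha)\in\Delta_+$ and $1\le(\eta,\alpha)\le q$ if $w(\alpha)\in\Delta_-$. The admissible weights of level $k$: $\overline{\mathrm{Pr}}_k=\{w\cdot(\mu-\tfrac pq\eta):\mu\in\overline{\mathrm{Pr}}_{k,\mathbb Z},w\in W,\eta\in P^\vee,C(w,\eta)\}$. *)

theory Defs
  imports Complex_Main "HOL-Combinatorics.Permutations"
begin

text \<open>Model of sl_(n+1): h* is identified with the traceless vectors in Q^(n+1),
  written as functions x :: nat => rat with coordinates x 0, ..., x n (zero beyond n)
  and sum zero.  The root eps_i - eps_j (i ~= j, i,j <= n) is the pair (i,j);
  the pairing (x, eps_i - eps_j) = x i - x j equals <x, alpha^vee>.\<close>

type_synonym wt = "nat \<Rightarrow> rat"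
type_synonym root = "nat \<times> nat"

definition roots :: "nat \<Rightarrow> root set" where
  "roots n = {(i,j). i \<le> n \<and> j \<le> n \<and> i \<noteq> j}"

definition pos_roots :: "nat \<Rightarrow> root set" where
  "pos_roots n = {(i,j). i \<le> n \<and> j \<le> n \<and> i < j}"

definition neg_roots :: "nat \<Rightarrow> root set" where
  "neg_roots n = {(i,j). i \<le> n \<and> j \<le> n \<and> j < i}"

definition pair :: "wt \<Rightarrow> root \<Rightarrow> rat" where
  "pair x a = x (fst a) - x (snd a)"

definition weyl :: "nat \<Rightarrow> (nat \<Rightarrow> nat) set" where
  "weyl n = {\<sigma>. \<sigma> permutes {..n}}"

definition wact :: "(nat \<Rightarrow> nat) \<Rightarrow> wt \<Rightarrow> wt" where
  "wact \<sigma> x = x \<circ> inv \<sigma>"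

definition ract :: "(nat \<Rightarrow> nat) \<Rightarrow> root \<Rightarrow> root" where
  "ract \<sigma> a = (\<sigma> (fst a), \<sigma> (snd a))"

definition wadd :: "wt \<Rightarrow> wt \<Rightarrow> wt" where
  "wadd x y = (\<lambda>i. x i + y i)"

definition wsub :: "wt \<Rightarrow> wt \<Rightarrow> wt" where
  "wsub x y = (\<lambda>i. x i - y i)"

definition wscale :: "rat \<Rightarrow> wt \<Rightarrow> wt" where
  "wscale c x = (\<lambda>i. c * x i)"

text \<open>rho = sum of fundamental weights: coordinates n/2 - i.\<close>
definition rho :: "nat \<Rightarrow> wt" where
  "rho n = (\<lambda>i. if i \<le> n then of_nat n / 2 - of_nat i else 0)"

text \<open>fundamental weight omega_i (1 <= i <= n): eps_1+...+eps_i projected to traceless part\<close>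
definition omega :: "nat \<Rightarrow> nat \<Rightarrow> wt" where
  "omega n i = (\<lambda>j. if j \<le> n then (if j < i then 1 else 0) - of_nat i / of_nat (n+1) else 0)"

definition dot_act :: "nat \<Rightarrow> (nat \<Rightarrow> nat) \<Rightarrow> wt \<Rightarrow> wt" where
  "dot_act n \<sigma> x = wsub (wact \<sigma> (wadd x (rho n))) (rho n)"

definition coweight_lattice :: "nat \<Rightarrow> wt set" where
  "coweight_lattice n = {(\<lambda>j. \<Sum>i\<in>{1..n}. of_int (c i) * omega n i j) | c :: nat \<Rightarrow> int. True}"

definition PrZ :: "nat \<Rightarrow> nat \<Rightarrow> wt set" where
  "PrZ n p = {(\<lambda>j. \<Sum>i\<in>{1..n}. of_nat (l i) * omega n i j) | l :: nat \<Rightarrow> nat.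
               (\<Sum>i\<in>{1..n}. l i) \<le> p - n - 1}"

definition condC :: "nat \<Rightarrow> nat \<Rightarrow> (nat \<Rightarrow> nat) \<Rightarrow> wt \<Rightarrow> bool" where
  "condC n q w \<eta> \<longleftrightarrow> (\<forall>a \<in> pos_roots n.
      (ract w a \<in> pos_roots n \<longrightarrow> 0 \<le> pair \<eta> a \<and> pair \<eta> a \<le> of_nat q - 1) \<and>
      (ract w a \<in> neg_roots n \<longrightarrow> 1 \<le> pair \<eta> a \<and> pair \<eta> a \<le> of_nat q))"

text \<open>Admissible weights of level k, where k + n + 1 = p/q.\<close>
definition Pr :: "nat \<Rightarrow> nat \<Rightarrow> nat \<Rightarrow> wt set" where
  "Pr n p q = {dot_act n w (wsub \<mu> (wscale (of_nat p / of_nat q) \<eta>)) | \<mu> w \<eta>.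
       \<mu> \<in> PrZ n p \<and> w \<in> weyl n \<and> \<eta> \<in> coweight_lattice n \<and> condC n q w \<eta>}"

definition int_roots :: "nat \<Rightarrow> wt \<Rightarrow> root set" where
  "int_roots n lam = {a \<in> roots n. pair (wadd lam (rho n)) a \<in> \<int>}"

definition Wlam :: "nat \<Rightarrow> wt \<Rightarrow> (nat \<Rightarrow> nat) set" where
  "Wlam n lam = {w \<in> weyl n. pos_roots n \<inter> ract w ` neg_roots n \<subseteq> pos_roots n - int_roots n lam}"

end

theory Submission
  imports Defs
begin

text \<open>Write an admissible weight as \<open>\<lambda> = w\<cdot>(\<mu> - (p/q)\<eta>)\<close>. For a positive root \<open>\<alpha>\<close> the
  shifted pairing \<open>\<langle>\<lambda>+\<rho>, w\<alpha>\<rangle>\<close> equals \<open>m - (p/q)\<langle>\<eta>,\<alpha>\<rangle>\<close> with \<open>1 \<le> m \<le> p-1\<close>; as \<open>p\<close> and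
  \<open>q\<close> are coprime it is an integer exactly when \<open>q\<close> divides \<open>\<langle>\<eta>,\<alpha>\<rangle>\<close>, and condition C leaves
  only \<open>\<langle>\<eta>,\<alpha>\<rangle> = 0\<close> (if \<open>w\<alpha> > 0\<close>, value \<open>m > 0\<close>) or \<open>\<langle>\<eta>,\<alpha>\<rangle> = q\<close> (if \<open>w\<alpha> < 0\<close>, value
  \<open>m - p < 0\<close>). Hence admissible weights are dominant on their integral roots, so the Weyl
  element relating two admissible weights in one dot orbit must lie in \<open>W\<^sup>\<lambda>\<close>. Conversely,
  for \<open>w \<in> W\<^sup>\<lambda>\<close> the data \<open>(w\<^sup>-\<^sup>1 w\<^sub>0, \<eta>)\<close> again satisfy C: the only ways C could fail are
  the two integral cases above, which \<open>W\<^sup>\<lambda>\<close> excludes.\<close>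

lemma pair_swap: "pair x (b, a) = - pair x (a, b)"
  by (simp add: pair_def)

lemma neg_roots_swap: "(a, b) \<in> neg_roots n \<longleftrightarrow> (b, a) \<in> pos_roots n"
  by (auto simp: pos_roots_def neg_roots_def)

lemma pos_roots_subset_roots: "pos_roots n \<subseteq> roots n"
  by (auto simp: pos_roots_def roots_def)

lemma roots_pos_or_neg: "\<alpha> \<in> roots n \<Longrightarrow> \<alpha> \<in> pos_roots n \<or> \<alpha> \<in> neg_roots n"
  by (auto simp: roots_def pos_roots_def neg_roots_def)

lemma pos_roots_not_neg: "\<alpha> \<in> pos_roots n \<Longrightarrow> \<alpha> \<notin> neg_roots n"
  by (auto simp: pos_roots_def neg_roots_def)

lemma ract_roots: "\<sigma> permutes {..n} \<Longrightarrow> \<alpha> \<in> roots n \<Longrightarrow> ract \<sigma> \<alpha> \<in> roots n"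
  by (auto simp: roots_def ract_def permutes_inj inj_eq dest: permutes_in_image[where x = "fst \<alpha>"]
      permutes_in_image[where x = "snd \<alpha>"])

lemma ract_ract_inv: "bij \<sigma> \<Longrightarrow> ract \<sigma> (ract (inv \<sigma>) \<alpha>) = \<alpha>"
  by (simp add: ract_def surj_f_inv_f bij_is_surj)

lemma pair_wact_ract: "bij \<sigma> \<Longrightarrow> pair (wact \<sigma> x) (ract \<sigma> \<alpha>) = pair x \<alpha>"
  by (simp add: pair_def wact_def ract_def inv_f_f bij_is_inj)

lemma pair_shifted_dot_act:
  assumes "bij \<sigma>"
  shows "pair (wadd (dot_act n \<sigma> x) (rho n)) (ract \<sigma> \<alpha>) = pair (wadd x (rho n)) \<alpha>"
proof -
  have "wadd (dot_act n \<sigma> x) (rho n) = wact \<sigma> (wadd x (rho n))"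
    by (auto simp: dot_act_def wadd_def wsub_def wact_def)
  then show ?thesis using assms by (simp add: pair_wact_ract)
qed

lemma dot_act_comp: "bij \<sigma> \<Longrightarrow> bij \<tau> \<Longrightarrow> dot_act n \<sigma> (dot_act n \<tau> x) = dot_act n (\<sigma> \<circ> \<tau>) x"
  by (rule ext) (simp add: dot_act_def wact_def wadd_def wsub_def o_inv_distrib)

lemma omega_diff:
  "a \<le> n \<Longrightarrow> b \<le> n \<Longrightarrow>
    omega n i a - omega n i b = (if a < i then 1 else 0) - (if b < i then 1 else 0)"
  by (simp add: omega_def)

lemma coweight_lattice_pair_Ints:
  assumes "\<eta> \<in> coweight_lattice n" "(a, b) \<in> roots n"
  shows "pair \<eta> (a, b) \<in> \<int>"
proof -
  obtain c where \<eta>: "\<eta> = (\<lambda>j. \<Sum>i\<in>{1..n}. of_int (c i) * omega n i j)"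
    using assms(1) unfolding coweight_lattice_def by blast
  have "pair \<eta> (a, b) = (\<Sum>i\<in>{1..n}. of_int (c i) * (omega n i a - omega n i b))"
    by (simp add: \<eta> pair_def algebra_simps flip: sum_subtractf)
  also have "\<dots> = (\<Sum>i\<in>{1..n}. of_int (c i * ((if a < i then 1 else 0) - (if b < i then 1 else 0))))"
    by (rule sum.cong) (use assms(2) in \<open>auto simp: omega_diff roots_def\<close>)
  finally show ?thesis by (simp only: of_int_sum[symmetric] Ints_of_int)
qed

lemma PrZ_shifted_pair:
  assumes "\<mu> \<in> PrZ n p" "(a, b) \<in> pos_roots n" "n + 1 \<le> p"
  obtains m :: int where "pair (wadd \<mu> (rho n)) (a, b) = of_int m" "1 \<le> m" "m < int p"
proof -
  obtain l where \<mu>: "\<mu> = (\<lambda>j. \<Sum>i\<in>{1..n}. of_nat (l i) * omega n i j)"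
    and l: "(\<Sum>i\<in>{1..n}. l i) \<le> p - n - 1"
    using assms(1) unfolding PrZ_def by blast
  have ab: "a < b" "b \<le> n" using assms(2) by (auto simp: pos_roots_def)
  define s where "s = (\<Sum>i\<in>{1..n}. if a < i \<and> i \<le> b then l i else 0)"
  have "s \<le> (\<Sum>i\<in>{1..n}. l i)" unfolding s_def by (rule sum_mono) auto
  have "\<mu> a - \<mu> b = (\<Sum>i\<in>{1..n}. of_nat (l i) * (omega n i a - omega n i b))"
    by (simp add: \<mu> algebra_simps flip: sum_subtractf)
  also have "\<dots> = (\<Sum>i\<in>{1..n}. of_nat (if a < i \<and> i \<le> b then l i else 0))"
    by (rule sum.cong) (use ab in \<open>auto simp: omega_diff\<close>)
  also have "\<dots> = of_nat s" by (simp add: s_def)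
  finally have "pair (wadd \<mu> (rho n)) (a, b) = of_int (int s + int (b - a))"
    using ab by (simp add: pair_def wadd_def rho_def of_nat_diff)
  moreover have "1 \<le> int s + int (b - a)" "int s + int (b - a) < int p"
    using ab assms(3) \<open>s \<le> _\<close> l by linarith+
  ultimately show thesis using that by blast
qed

lemma Ints_diff_frac_mult_iff:
  assumes "q \<ge> 1" "coprime p q"
  shows "(of_int m - of_nat p / of_nat q * of_int e :: rat) \<in> \<int> \<longleftrightarrow> int q dvd e"
proof
  assume "of_int m - of_nat p / of_nat q * of_int e \<in> (\<int> :: rat set)"
  then have "of_int m - (of_int m - of_nat p / of_nat q * of_int e) \<in> (\<int> :: rat set)"
    by simp
  then obtain k where "of_nat p / of_nat q * of_int e = (of_int k :: rat)"
    by (auto elim: Ints_cases)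
  then have "of_int (int p * e) = (of_int (int q * k) :: rat)"
    using assms(1) by (simp add: field_simps)
  then have "int q dvd int p * e"
    by (metis dvd_triv_left of_int_eq_iff)
  moreover have "coprime (int q) (int p)"
    using assms(2) by (simp add: coprime_commute)
  ultimately show "int q dvd e"
    using coprime_dvd_mult_right_iff by blast
next
  assume "int q dvd e"
  then obtain t where "e = int q * t" by blast
  then show "of_int m - of_nat p / of_nat q * of_int e \<in> (\<int> :: rat set)"
    using assms(1) by simp
qed

lemma int_dvd_range_cases:
  fixes d e :: int
  assumes "d dvd e" "0 \<le> e" "e \<le> d"
  shows "e = 0 \<or> e = d"
  using assms zdvd_not_zless[of e d] by (cases "e = 0 \<or> e = d") auto

lemma admissible_shifted_pair:
  assumes "n + 1 \<le> p" "\<mu> \<in> PrZ n p" "\<eta> \<in> coweight_lattice n" "bij w" "\<alpha> \<in> pos_roots n"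
  obtains m e :: int
  where "pair (wadd (dot_act n w (wsub \<mu> (wscale c \<eta>))) (rho n)) (ract w \<alpha>) = of_int m - c * of_int e"
    and "pair \<eta> \<alpha> = of_int e" and "1 \<le> m" and "m < int p"
proof -
  obtain a b where \<alpha>: "\<alpha> = (a, b)" by fastforce
  obtain m where m: "pair (wadd \<mu> (rho n)) \<alpha> = of_int m" "1 \<le> m" "m < int p"
    using PrZ_shifted_pair assms(1,2,5) unfolding \<alpha> by metis
  obtain e where e: "pair \<eta> \<alpha> = of_int e"
    using coweight_lattice_pair_Ints[OF assms(3)] assms(5) pos_roots_subset_roots
    unfolding \<alpha> by (metis Ints_cases subsetD)
  have "pair (wadd (dot_act n w (wsub \<mu> (wscale c \<eta>))) (rho n)) (ract w \<alpha>)
      = pair (wadd (wsub \<mu> (wscale c \<eta>)) (rho n)) \<alpha>"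
    using assms(4) by (rule pair_shifted_dot_act)
  also have "\<dots> = pair (wadd \<mu> (rho n)) \<alpha> - c * pair \<eta> \<alpha>"
    by (simp add: pair_def wadd_def wsub_def wscale_def algebra_simps)
  finally show thesis using m e that by simp
qed

lemma Pr_integral_pos_root_pos:
  assumes q: "q \<ge> 1" and cop: "coprime p q" and pn: "n + 1 \<le> p" and lam: "lam \<in> Pr n p q"
    and \<gamma>: "\<gamma> \<in> pos_roots n" and int: "pair (wadd lam (rho n)) \<gamma> \<in> \<int>"
  shows "pair (wadd lam (rho n)) \<gamma> > 0"
proof -
  obtain \<mu> w \<eta> where \<mu>: "\<mu> \<in> PrZ n p" and w: "w permutes {..n}" and \<eta>: "\<eta> \<in> coweight_lattice n"
    and C: "condC n q w \<eta>" and lam_eq: "lam = dot_act n w (wsub \<mu> (wscale (of_nat p / of_nat q) \<eta>))"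
    using lam unfolding Pr_def weyl_def by blast
  have bij: "bij w" using w by (rule permutes_bij)
  obtain a b where ab: "ract (inv w) \<gamma> = (a, b)" by fastforce
  have "(a, b) \<in> roots n"
    using ract_roots[OF permutes_inv[OF w]] \<gamma> pos_roots_subset_roots ab by (metis subsetD)
  moreover have w_ab: "ract w (a, b) = \<gamma>"
    using ract_ract_inv[OF bij] ab by metis
  ultimately consider (pos) "(a, b) \<in> pos_roots n" | (neg) "(b, a) \<in> pos_roots n"
    using roots_pos_or_neg neg_roots_swap by blast
  then show ?thesis
  proof cases
    case pos
    obtain m e :: int where val: "pair (wadd lam (rho n)) \<gamma> = of_int m - of_nat p / of_nat q * of_int e"
      and e: "pair \<eta> (a, b) = of_int e" and "1 \<le> m"
      using admissible_shifted_pair[OF pn \<mu> \<eta> bij pos] w_ab lam_eq by metis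
    have "0 \<le> e" "e \<le> int q - 1"
      using C pos \<gamma> w_ab e by (auto simp: condC_def)
    moreover have "int q dvd e" using int val Ints_diff_frac_mult_iff[OF q cop] by simp
    ultimately have "e = 0" using int_dvd_range_cases by force
    then show ?thesis using val \<open>1 \<le> m\<close> by simp
  next
    case neg
    obtain b' a' where \<gamma>_eq: "\<gamma> = (b', a')" by fastforce
    have w_ba: "ract w (b, a) = (a', b')" using w_ab \<gamma>_eq by (simp add: ract_def)
    have neg_w: "(a', b') \<in> neg_roots n" using \<gamma> \<gamma>_eq neg_roots_swap by blast
    obtain m e :: int where val: "pair (wadd lam (rho n)) (a', b') = of_int m - of_nat p / of_nat q * of_int e"
      and e: "pair \<eta> (b, a) = of_int e" and "m < int p"
      using admissible_shifted_pair[OF pn \<mu> \<eta> bij neg] w_ba lam_eq by metis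
    have "1 \<le> e" "e \<le> int q"
      using C neg neg_w w_ba e by (auto simp: condC_def)
    moreover have "int q dvd e"
      using int val Ints_diff_frac_mult_iff[OF q cop] \<gamma>_eq pair_swap[of _ a' b'] by (metis minus_in_Ints_iff)
    ultimately have "e = int q" using int_dvd_range_cases by force
    then show ?thesis using val \<open>m < int p\<close> q \<gamma>_eq pair_swap[of _ a' b'] by simp
  qed
qed

lemma Wlam_iff:
  "w \<in> Wlam n lam \<longleftrightarrow> w \<in> weyl n \<and>
    (\<forall>\<gamma> \<in> pos_roots n. ract (inv w) \<gamma> \<in> neg_roots n \<longrightarrow> pair (wadd lam (rho n)) \<gamma> \<notin> \<int>)"
proof -
  have img: "\<gamma> \<in> ract w ` neg_roots n \<longleftrightarrow> ract (inv w) \<gamma> \<in> neg_roots n" if "bij w" for \<gamma>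
    using that ract_ract_inv[of w] ract_ract_inv[of "inv w"] bij_imp_bij_inv[of w] inv_inv_eq[of w]
    by (metis image_iff)
  have int: "\<gamma> \<in> int_roots n lam \<longleftrightarrow> pair (wadd lam (rho n)) \<gamma> \<in> \<int>" if "\<gamma> \<in> pos_roots n" for \<gamma>
    using that pos_roots_subset_roots by (auto simp: int_roots_def)
  have "pos_roots n \<inter> ract w ` neg_roots n \<subseteq> pos_roots n - int_roots n lam \<longleftrightarrow>
      (\<forall>\<gamma> \<in> pos_roots n. \<gamma> \<in> ract w ` neg_roots n \<longrightarrow> \<gamma> \<notin> int_roots n lam)"
    by blast
  also have "\<dots> \<longleftrightarrow> (\<forall>\<gamma> \<in> pos_roots n. ract (inv w) \<gamma> \<in> neg_roots n \<longrightarrow>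
      pair (wadd lam (rho n)) \<gamma> \<notin> \<int>)" if "bij w"
    using img[OF that] int by simp
  finally show ?thesis
    unfolding Wlam_def weyl_def using permutes_bij by blast
qed

lemma Pr_dot_act_imp_Wlam:
  assumes q: "q \<ge> 1" and cop: "coprime p q" and pn: "n + 1 \<le> p" and lam: "lam \<in> Pr n p q"
    and u: "u \<in> weyl n" and \<mu>: "dot_act n u lam \<in> Pr n p q"
  shows "inv u \<in> Wlam n lam"
  unfolding Wlam_iff
proof (intro conjI ballI impI notI)
  have up: "u permutes {..n}" using u by (simp add: weyl_def)
  then show "inv u \<in> weyl n" by (simp add: weyl_def permutes_inv)
  fix \<gamma> assume \<gamma>: "\<gamma> \<in> pos_roots n" and neg: "ract (inv (inv u)) \<gamma> \<in> neg_roots n"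
    and int: "pair (wadd lam (rho n)) \<gamma> \<in> \<int>"
  obtain a b where ab: "ract u \<gamma> = (a, b)" by fastforce
  have ba: "(b, a) \<in> pos_roots n"
    using neg ab neg_roots_swap inv_inv_eq[OF permutes_bij[OF up]] by metis
  have "pair (wadd (dot_act n u lam) (rho n)) (b, a) = - pair (wadd lam (rho n)) \<gamma>"
    using pair_shifted_dot_act[OF permutes_bij[OF up], of n lam \<gamma>] ab pair_swap by metis
  moreover have "pair (wadd lam (rho n)) \<gamma> > 0"
    using Pr_integral_pos_root_pos[OF q cop pn lam \<gamma> int] .
  ultimately show False
    using Pr_integral_pos_root_pos[OF q cop pn \<mu> ba] int by simp
qed

lemma condC_inv_Wlam_comp:
  assumes q: "q \<ge> 1" and cop: "coprime p q" and pn: "n + 1 \<le> p"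
    and \<mu>: "\<mu> \<in> PrZ n p" and w0: "w0 permutes {..n}" and \<eta>: "\<eta> \<in> coweight_lattice n"
    and C: "condC n q w0 \<eta>"
    and lam_eq: "lam = dot_act n w0 (wsub \<mu> (wscale (of_nat p / of_nat q) \<eta>))"
    and w: "w \<in> Wlam n lam"
  shows "condC n q (inv w \<circ> w0) \<eta>"
  unfolding condC_def
proof
  fix \<alpha> assume \<alpha>: "\<alpha> \<in> pos_roots n"
  have W: "\<And>\<gamma>. \<gamma> \<in> pos_roots n \<Longrightarrow> ract (inv w) \<gamma> \<in> neg_roots n \<Longrightarrow> pair (wadd lam (rho n)) \<gamma> \<notin> \<int>"
    using w unfolding Wlam_iff by blast
  obtain x y where \<beta>: "ract w0 \<alpha> = (x, y)" by fastforce
  have "(x, y) \<in> roots n"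
    using ract_roots[OF w0] \<alpha> pos_roots_subset_roots \<beta> by (metis subsetD)
  then consider (pos) "(x, y) \<in> pos_roots n" | (neg) "(x, y) \<in> neg_roots n"
    using roots_pos_or_neg by blast
  moreover obtain m e :: int
    where val: "pair (wadd lam (rho n)) (x, y) = of_int m - of_nat p / of_nat q * of_int e"
      and e: "pair \<eta> \<alpha> = of_int e"
    using admissible_shifted_pair[OF pn \<mu> \<eta> permutes_bij[OF w0] \<alpha>] \<beta> lam_eq by metis
  moreover have u\<beta>: "ract (inv w \<circ> w0) \<alpha> = (inv w x, inv w y)"
    using \<beta> by (simp add: ract_def)
  ultimately show "(ract (inv w \<circ> w0) \<alpha> \<in> pos_roots n \<longrightarrow> 0 \<le> pair \<eta> \<alpha> \<and> pair \<eta> \<alpha> \<le> of_nat q - 1) \<and>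
      (ract (inv w \<circ> w0) \<alpha> \<in> neg_roots n \<longrightarrow> 1 \<le> pair \<eta> \<alpha> \<and> pair \<eta> \<alpha> \<le> of_nat q)"
  proof cases
    case pos
    have "0 \<le> e" "e \<le> int q - 1"
      using C \<alpha> \<beta> pos e by (auto simp: condC_def)
    moreover have "e \<noteq> 0" if "(inv w x, inv w y) \<in> neg_roots n"
      using W[OF pos] that val by (auto simp: ract_def)
    ultimately show ?thesis
      using u\<beta> e by (auto simp: pos_roots_not_neg)
  next
    case neg
    have "1 \<le> e" "e \<le> int q"
      using C \<alpha> \<beta> neg e by (auto simp: condC_def)
    moreover have "e \<noteq> int q" if "(inv w x, inv w y) \<in> pos_roots n"
    proof
      assume "e = int q"
      then have "pair (wadd lam (rho n)) (y, x) = of_int (int p - m)"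
        using val q pair_swap[of _ y x] by simp
      moreover have "(y, x) \<in> pos_roots n" "ract (inv w) (y, x) \<in> neg_roots n"
        using neg that neg_roots_swap by (auto simp: ract_def)
      ultimately show False using W by (metis Ints_diff Ints_of_int Ints_of_nat)
    qed
    ultimately show ?thesis
      using u\<beta> e by (auto simp: pos_roots_not_neg neg_roots_swap)
  qed
qed

lemma Wlam_dot_act_in_Pr:
  assumes q: "q \<ge> 1" and cop: "coprime p q" and pn: "n + 1 \<le> p" and lam: "lam \<in> Pr n p q"
    and w: "w \<in> Wlam n lam"
  shows "dot_act n (inv w) lam \<in> Pr n p q"
proof -
  obtain \<mu> w0 \<eta> where \<mu>: "\<mu> \<in> PrZ n p" and w0: "w0 permutes {..n}" and \<eta>: "\<eta> \<in> coweight_lattice n"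
    and C: "condC n q w0 \<eta>" and lam_eq: "lam = dot_act n w0 (wsub \<mu> (wscale (of_nat p / of_nat q) \<eta>))"
    using lam unfolding Pr_def weyl_def by blast
  have wp: "w permutes {..n}" using w by (simp add: Wlam_def weyl_def)
  have "inv w \<circ> w0 \<in> weyl n"
    using permutes_compose[OF w0 permutes_inv[OF wp]] by (simp add: weyl_def)
  moreover have "dot_act n (inv w) lam = dot_act n (inv w \<circ> w0) (wsub \<mu> (wscale (of_nat p / of_nat q) \<eta>))"
    using lam_eq dot_act_comp permutes_bij[OF w0] permutes_bij[OF permutes_inv[OF wp]] by metis
  moreover have "condC n q (inv w \<circ> w0) \<eta>"
    using condC_inv_Wlam_comp[OF q cop pn \<mu> w0 \<eta> C lam_eq w] .
  ultimately show ?thesis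
    unfolding Pr_def using \<mu> \<eta> by blast
qed

theorem mainTheorem7:
  fixes n p q :: nat and k :: rat and lam \<mu> :: wt
  assumes "n \<ge> 1" and "q \<ge> 1" and "coprime p q" and "p \<ge> n + 1"
    and "k + of_nat n + 1 = of_nat p / of_nat q"
    and "lam \<in> Pr n p q"
    and "\<mu> \<in> (\<lambda>w. dot_act n w lam) ` weyl n"
  shows "\<mu> \<in> Pr n p q \<longleftrightarrow> (\<exists>w \<in> Wlam n lam. \<mu> = dot_act n (inv w) lam)"
proof
  obtain u where u: "u \<in> weyl n" and \<mu>_eq: "\<mu> = dot_act n u lam"
    using assms(7) by blast
  assume "\<mu> \<in> Pr n p q"
  then have "inv u \<in> Wlam n lam"
    using Pr_dot_act_imp_Wlam[OF assms(2,3) _ assms(6) u] assms(4) \<mu>_eq by simp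
  moreover have "\<mu> = dot_act n (inv (inv u)) lam"
    using u \<mu>_eq by (simp add: weyl_def inv_inv_eq permutes_bij)
  ultimately show "\<exists>w \<in> Wlam n lam. \<mu> = dot_act n (inv w) lam" by blast
next
  assume "\<exists>w \<in> Wlam n lam. \<mu> = dot_act n (inv w) lam"
  then show "\<mu> \<in> Pr n p q"
    using Wlam_dot_act_in_Pr[OF assms(2,3) _ assms(6)] assms(4) by auto
qed

end
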